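(* Let $\langle N,P,c,b,\mathcal{A}\rangle$ be any PB instance and let $S$ be the output of the algorithm Ordered-Relax on it. Then $S$ is feasible ($c(S)\le b$) and $$ALG\ \ge\ OPT-\frac{|A_j\setminus S|}{|S\setminus A_j|}\,(b-OPT),$$ where $j\in\arg\min_{i\in N}c(A_i\cap S)$, $ALG=c(A_j\cap S)$, and $OPT=\max_{T\subseteq P,\,c(T)\le b}\min_{i\in N}c(T\cap A_i)$ is the minimum utility in an optimal MPB solution.
   Context: A PB instance is $\langle N,P,c,b,\mathcal{A}\rangle$ with voters $N=\{1,\dots,n\}$, projects $P=\{p_1,\dots,p_m\}$, costs $c:P\to\mathbb{N}$, budget $b\in\mathbb{N}$, and approval sets $A_i\subseteq P$. $c(S)=\sum_{p\in S}c(p)$; $S$ is feasible if $c(S)\le b$. Algorithm Ordered-Relax: compute an optimal solution $(q^*,x^* )$ of the linear program: maximize $q$ subject to $q\le\sum_{p\in A_i}c(p)x_p$ for all $i\in N$, $\sum_{p\in P}c(p)x_p\le b$, $0\le x_p\le 1$ for all $p\in P$, $q\ge 0$. Then order the projects in non-increasing order of $c(p)x^*_p$ (ties broken arbitrarily), start with $S=\emptyset$, and add projects to $S$ in this order, stopping as soon as the next project in the order does not fit within the remaining budget (i.e., would make $c(S)$ exceed $b$); output $S$. *)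

theory Defs
  imports Complex_Main
begin

(* Voters are 1..n, approval sets A :: nat => 'p set, projects P :: 'p set (finite),
   costs c :: 'p => nat, budget b :: nat. *)

definition cost :: "('p \<Rightarrow> nat) \<Rightarrow> 'p set \<Rightarrow> nat" where
  "cost c S = (\<Sum>p\<in>S. c p)"

definition min_util :: "nat \<Rightarrow> (nat \<Rightarrow> 'p set) \<Rightarrow> ('p \<Rightarrow> nat) \<Rightarrow> 'p set \<Rightarrow> nat" where
  "min_util n A c T = Min ((\<lambda>i. cost c (T \<inter> A i)) ` {1..n})"

definition OPT :: "nat \<Rightarrow> 'p set \<Rightarrow> ('p \<Rightarrow> nat) \<Rightarrow> nat \<Rightarrow> (nat \<Rightarrow> 'p set) \<Rightarrow> nat" where
  "OPT n P c b A = Max ((\<lambda>T. min_util n A c T) ` {T. T \<subseteq> P \<and> cost c T \<le> b})"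

definition lp_feasible :: "nat \<Rightarrow> 'p set \<Rightarrow> ('p \<Rightarrow> nat) \<Rightarrow> nat \<Rightarrow> (nat \<Rightarrow> 'p set)
    \<Rightarrow> real \<Rightarrow> ('p \<Rightarrow> real) \<Rightarrow> bool" where
  "lp_feasible n P c b A q x \<longleftrightarrow>
     (\<forall>i\<in>{1..n}. q \<le> (\<Sum>p\<in>A i. real (c p) * x p)) \<and>
     (\<Sum>p\<in>P. real (c p) * x p) \<le> real b \<and>
     (\<forall>p\<in>P. 0 \<le> x p \<and> x p \<le> 1) \<and> q \<ge> 0"

definition lp_optimal :: "nat \<Rightarrow> 'p set \<Rightarrow> ('p \<Rightarrow> nat) \<Rightarrow> nat \<Rightarrow> (nat \<Rightarrow> 'p set)
    \<Rightarrow> real \<Rightarrow> ('p \<Rightarrow> real) \<Rightarrow> bool" where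
  "lp_optimal n P c b A q x \<longleftrightarrow> lp_feasible n P c b A q x \<and>
     (\<forall>q' x'. lp_feasible n P c b A q' x' \<longrightarrow> q' \<le> q)"

fun greedy_prefix :: "('p \<Rightarrow> nat) \<Rightarrow> nat \<Rightarrow> 'p list \<Rightarrow> 'p list" where
  "greedy_prefix c r [] = []"
| "greedy_prefix c r (p # ps) =
     (if c p \<le> r then p # greedy_prefix c (r - c p) ps else [])"

(* S is a possible output of Ordered-Relax: for some optimal LP solution (q_opt, x_opt)
   and some ordering of P that is non-increasing in c(p) x_opt(p) (arbitrary ties) *)
definition ordered_relax_output :: "nat \<Rightarrow> 'p set \<Rightarrow> ('p \<Rightarrow> nat) \<Rightarrow> nat \<Rightarrow> (nat \<Rightarrow> 'p set)
    \<Rightarrow> 'p set \<Rightarrow> bool" where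
  "ordered_relax_output n P c b A S \<longleftrightarrow>
     (\<exists>q x ps. lp_optimal n P c b A q x \<and> distinct ps \<and> set ps = P \<and>
        sorted_wrt (\<lambda>p p'. real (c p) * x p \<ge> real (c p') * x p') ps \<and>
        S = set (greedy_prefix c b ps))"

end

theory Submission
  imports Defs "HOL-Library.Indicator_Function"
begin

(* Write y p = c(p) x(p) for the optimal LP solution (q, x). The indicator vector of an optimal
   bundle is LP-feasible, so OPT \<le> q. Because the projects are taken in non-increasing order of y,
   every project outside S weighs at most t = min of y over S - A j. Hence
   q \<le> y(A j) \<le> c(A j \<inter> S) + |A j - S| t, while |S - A j| t \<le> y(P - A j) \<le> b - q.
   Eliminating t gives c(A j \<inter> S) \<ge> q - |A j - S| / |S - A j| (b - q), and the right-hand side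
   is increasing in q. The argument works for every voter j. *)

lemma greedy_prefix_eq_take: "greedy_prefix c r ps = take (length (greedy_prefix c r ps)) ps"
  by (induction ps arbitrary: r) auto

lemma sum_list_greedy_prefix_le: "sum_list (map c (greedy_prefix c r ps)) \<le> r"
proof (induction ps arbitrary: r)
  case (Cons p ps)
  show ?case using Cons.IH[of "r - c p"] by auto
qed simp

lemma cost_greedy_prefix_le:
  assumes "distinct ps"
  shows "cost c (set (greedy_prefix c r ps)) \<le> r"
proof -
  have "distinct (greedy_prefix c r ps)"
    using assms by (metis greedy_prefix_eq_take distinct_take)
  then show ?thesis
    using sum_list_greedy_prefix_le[of c r ps]
    by (simp add: cost_def sum_list_distinct_conv_sum_set)
qed

lemma sorted_wrt_greedy_prefix:
  assumes "sorted_wrt R ps" "s \<in> set (greedy_prefix c r ps)"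
    and "p \<in> set ps - set (greedy_prefix c r ps)"
  shows "R s p"
proof -
  define k where "k = length (greedy_prefix c r ps)"
  have "s \<in> set (take k ps)" "p \<in> set (drop k ps)"
    using assms(2,3) greedy_prefix_eq_take[of c r ps] append_take_drop_id[of k ps]
    unfolding k_def by (metis Diff_iff Un_iff set_append)+
  then show ?thesis
    using assms(1) sorted_wrt_append[of R "take k ps" "drop k ps"] by simp
qed

lemma OPT_attained:
  assumes "finite P"
  obtains T where "T \<subseteq> P" "cost c T \<le> b" "OPT n P c b A = min_util n A c T"
proof -
  let ?F = "{T. T \<subseteq> P \<and> cost c T \<le> b}"
  have "finite ?F"
    using assms by (auto intro: finite_subset[of _ "Pow P"])
  moreover have "{} \<in> ?F"
    by (simp add: cost_def)
  ultimately have "OPT n P c b A \<in> min_util n A c ` ?F"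
    unfolding OPT_def by (intro Max_in) auto
  then show ?thesis
    using that by auto
qed

lemma lp_feasible_indicator:
  assumes "finite P" "\<forall>i\<in>{1..n}. A i \<subseteq> P" "T \<subseteq> P" "cost c T \<le> b"
  shows "lp_feasible n P c b A (real (min_util n A c T)) (indicator T)"
  unfolding lp_feasible_def
proof (intro conjI ballI)
  fix i assume i: "i \<in> {1..n}"
  have "finite (A i)"
    using assms(1,2) i finite_subset by blast
  moreover have "min_util n A c T \<le> cost c (T \<inter> A i)"
    unfolding min_util_def using i by (intro Min_le) auto
  ultimately show "real (min_util n A c T) \<le> (\<Sum>p\<in>A i. real (c p) * indicator T p)"
    by (simp add: cost_def Int_commute flip: of_nat_sum)
next
  show "(\<Sum>p\<in>P. real (c p) * indicator T p) \<le> real b"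
    using assms(1,3,4) by (simp add: cost_def Int_absorb1 flip: of_nat_sum)
qed (auto simp: indicator_def)

lemma OPT_le_lp_optimal:
  assumes "finite P" "\<forall>i\<in>{1..n}. A i \<subseteq> P" "lp_optimal n P c b A q x"
  shows "real (OPT n P c b A) \<le> q"
proof -
  obtain T where "T \<subseteq> P" "cost c T \<le> b" and OPT_eq: "OPT n P c b A = min_util n A c T"
    using OPT_attained[OF assms(1)] .
  then have "lp_feasible n P c b A (real (OPT n P c b A)) (indicator T)"
    using lp_feasible_indicator assms(1,2) by metis
  then show ?thesis
    using assms(3) unfolding lp_optimal_def by blast
qed

lemma heaviest_set_utility_bound:
  fixes y :: "'p \<Rightarrow> real"
  assumes "finite P" "B \<subseteq> P" "S \<subseteq> P" "S - B \<noteq> {}"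
    and y_bounds: "\<forall>p\<in>P. 0 \<le> y p \<and> y p \<le> real (c p)"
    and heaviest: "\<forall>s\<in>S. \<forall>p\<in>P - S. y p \<le> y s"
    and "q \<le> sum y B" "sum y P \<le> real b"
  shows "q - real (card (B - S)) / real (card (S - B)) * (real b - q) \<le> real (cost c (B \<inter> S))"
proof -
  define a where "a = real (card (B - S))"
  define s where "s = real (card (S - B))"
  define t where "t = Min (y ` (S - B))"
  have fin: "finite B" "finite (S - B)" "finite (P - B)"
    using assms(1-3) finite_subset by blast+
  have "s > 0"
    unfolding s_def using fin(2) assms(4) by (simp add: card_gt_0_iff)
  have outside_le_t: "y p \<le> t" if "p \<in> B - S" for p
    unfolding t_def using fin(2) assms(2,4) heaviest that by (auto intro: Min.boundedI)
  have "q \<le> sum y (B \<inter> S) + sum y (B - S)"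
    using assms(7) fin(1) by (metis sum.Int_Diff)
  also have "sum y (B \<inter> S) \<le> real (cost c (B \<inter> S))"
    unfolding cost_def of_nat_sum using assms(2) y_bounds by (intro sum_mono) auto
  also have "sum y (B - S) \<le> a * t"
    unfolding a_def by (rule sum_bounded_above) (rule outside_le_t)
  finally have q_le: "q - real (cost c (B \<inter> S)) \<le> a * t"
    by simp
  have "s * t \<le> sum y (S - B)"
    unfolding s_def t_def using fin(2) by (intro sum_bounded_below) simp
  also have "\<dots> \<le> sum y (P - B)"
    using fin(3) assms(3) y_bounds by (intro sum_mono2) auto
  also have "\<dots> = sum y P - sum y B"
    using assms(1,2) by (simp add: sum_diff)
  finally have "t \<le> (real b - q) / s"
    using assms(7,8) \<open>s > 0\<close> by (simp add: le_divide_eq mult.commute)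
  then have "a * t \<le> a * ((real b - q) / s)"
    unfolding a_def by (intro mult_left_mono) simp_all
  also have "\<dots> = a / s * (real b - q)"
    by simp
  finally show ?thesis
    using q_le
    unfolding a_def s_def by linarith
qed

theorem lemma1:
  fixes n :: nat and P :: "'p set" and c :: "'p \<Rightarrow> nat" and b :: nat
    and A :: "nat \<Rightarrow> 'p set" and S :: "'p set" and j :: nat
  assumes "n \<ge> 1" and "finite P" and "\<forall>i\<in>{1..n}. A i \<subseteq> P"
    and "ordered_relax_output n P c b A S"
    and "j \<in> {1..n}" and "\<forall>i\<in>{1..n}. cost c (A j \<inter> S) \<le> cost c (A i \<inter> S)"
  shows "cost c S \<le> b \<and>
    (S - A j \<noteq> {} \<longrightarrow>
      real (cost c (A j \<inter> S)) \<ge> real (OPT n P c b A)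
        - real (card (A j - S)) / real (card (S - A j)) * (real b - real (OPT n P c b A)))"
proof -
  obtain q x ps where opt: "lp_optimal n P c b A q x" and "distinct ps" "set ps = P"
    and sorted: "sorted_wrt (\<lambda>p p'. real (c p) * x p \<ge> real (c p') * x p') ps"
    and S_def: "S = set (greedy_prefix c b ps)"
    using assms(4) unfolding ordered_relax_output_def by blast
  let ?r = "real (card (A j - S)) / real (card (S - A j))"
  have heaviest: "\<forall>s\<in>S. \<forall>p\<in>P - S. real (c p) * x p \<le> real (c s) * x s"
    using sorted_wrt_greedy_prefix[OF sorted] S_def \<open>set ps = P\<close> by blast
  have y_bounds: "\<forall>p\<in>P. 0 \<le> real (c p) * x p \<and> real (c p) * x p \<le> real (c p)"
    and q_le: "q \<le> (\<Sum>p\<in>A j. real (c p) * x p)"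
    and budget: "(\<Sum>p\<in>P. real (c p) * x p) \<le> real b"
    using opt assms(5) unfolding lp_optimal_def lp_feasible_def by (auto simp: mult_left_le)
  have "S \<subseteq> P" "A j \<subseteq> P"
    using S_def greedy_prefix_eq_take \<open>set ps = P\<close> assms(3,5) by (metis set_take_subset, blast)
  have OPT_le: "real (OPT n P c b A) \<le> q"
    using OPT_le_lp_optimal[OF assms(2,3) opt] .
  then have r_mono: "?r * (real b - q) \<le> ?r * (real b - real (OPT n P c b A))"
    by (intro mult_left_mono) simp_all
  have "cost c S \<le> b"
    using cost_greedy_prefix_le[OF \<open>distinct ps\<close>] S_def by simp
  moreover have "real (OPT n P c b A) - ?r * (real b - real (OPT n P c b A))
      \<le> real (cost c (A j \<inter> S))" if "S - A j \<noteq> {}"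
    using heaviest_set_utility_bound[OF assms(2) \<open>A j \<subseteq> P\<close> \<open>S \<subseteq> P\<close> that
        y_bounds heaviest q_le budget] r_mono OPT_le by linarith
  ultimately show ?thesis
    by blast
qed

end
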